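(* Let $\mathbb T$ be a finitary monad corresponding to an algebraic theory over a signature $\Sigma$, and let $B$ be a $\mathbb T$-algebra finitely generated by a finite set $B_0$. For every reactive expression $e\in\mathrm{Exp}_\Sigma(B_0)$ there exist a $\mathbb T$-automaton $m$ (with output algebra $B$ and finite state set $X$) and a state $x\in X$ with $\llbracket e\rrbracket=\llbracket x\rrbracket_m$; conversely, for every such $\mathbb T$-automaton $m$ and every state $x\in X$ there is a reactive expression $e\in\mathrm{Exp}_\Sigma(B_0)$ with $\llbracket e\rrbracket=\llbracket x\rrbracket_m$.
   Context: Fix a finite set of actions $A=\{a_1,\dots,a_n\}$; $LX=B\times X^A$; $L$-coalgebras $(X,o,\partial_a)$ with $\partial_\epsilon(x)=x$, $\partial_{aw}(x)=\partial_w(\partial_a(x))$; $B^{A^*}$ is the final $L$-coalgebra ($o(\sigma)=\sigma(\epsilon)$, $\partial_a\sigma=\lambda w.\sigma(aw)$) and $\llbracket-\rrbracket$ denotes the unique coalgebra morphism into it. $TX$ is the set of $\Sigma$-terms over $X$ modulo the theory; "finitely generated by $B_0$" means there is a surjective $\mathbb T$-algebra morphism $TB_0\to B$. A $\mathbb T$-automaton consists of a finite set $X$, the algebra $a^m:TB\to B$, and maps $o^m:X\to B$, $t^m:A\times X\to TX$; its trace semantics is $\llbracket x\rrbracket_m=\llbracket\eta_X(x)\rrbracket_{TX}$, where $TX$ carries the $L$-coalgebra structure $m^\sharp:TX\to B\times(TX)^A$, the unique $\mathbb T$-algebra morphism (for the componentwise algebra structure built from $a^m$ and the free structure on $TX$)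 with $m^\sharp(\eta_X(x))=(o^m(x),\lambda a.\,t^m(a,x))$. Reactive expressions are the closed terms $\delta$ of the grammar $\delta::=x\mid\gamma\mid f(\delta,\dots,\delta)$ ($f\in\Sigma$), $\gamma::=\mu x.\,(a_1.\delta\pitchfork\cdots\pitchfork a_n.\delta\pitchfork\beta)$, $\beta::=b\mid f(\beta,\dots,\beta)$ ($b\in B_0$); their set $\mathrm{Exp}_\Sigma(B_0)$ is an $L$-coalgebra via $o(f(e_1,\dots,e_k))=f^B(o(e_1),\dots,o(e_k))$, $\partial_a(f(e_1,\dots,e_k))=f(\partial_a e_1,\dots,\partial_a e_k)$, $o(\mu x.(a_1.e_1\pitchfork\cdots\pitchfork a_n.e_n\pitchfork\beta))=$ the value of $\beta$ in $B$, $\partial_{a_i}(\mu x.(a_1.e_1\pitchfork\cdots\pitchfork a_n.e_n\pitchfork\beta))=e_i[\mu x.(a_1.e_1\pitchfork\cdots\pitchfork a_n.e_n\pitchfork\beta)/x]$, and $\llbracket e\rrbracket$ is the trace semantics of $e$ in this coalgebra. *)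

theory Defs
  imports Main
begin

text \<open>A signature is a type of function symbols 'f with an arity map ar (finite arities,
  so the induced monad is finitary). Sigma-terms over variables 'v:\<close>

datatype ('f,'v) trm = Var 'v | App 'f "('f,'v) trm list"

fun wf_trm :: "('f \<Rightarrow> nat) \<Rightarrow> ('f,'v) trm \<Rightarrow> bool" where
  "wf_trm ar (Var x) = True"
| "wf_trm ar (App f ts) = (length ts = ar f \<and> (\<forall>t\<in>set ts. wf_trm ar t))"

fun vars_trm :: "('f,'v) trm \<Rightarrow> 'v set" where
  "vars_trm (Var x) = {x}"
| "vars_trm (App f ts) = (\<Union>t\<in>set ts. vars_trm t)"

fun eval_trm :: "('f \<Rightarrow> 'b list \<Rightarrow> 'b) \<Rightarrow> ('v \<Rightarrow> 'b) \<Rightarrow> ('f,'v) trm \<Rightarrow> 'b" where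
  "eval_trm I \<rho> (Var x) = \<rho> x"
| "eval_trm I \<rho> (App f ts) = I f (map (eval_trm I \<rho>) ts)"

fun subst_trm :: "('v \<Rightarrow> ('f,'w) trm) \<Rightarrow> ('f,'v) trm \<Rightarrow> ('f,'w) trm" where
  "subst_trm \<sigma> (Var x) = \<sigma> x"
| "subst_trm \<sigma> (App f ts) = App f (map (subst_trm \<sigma>) ts)"

definition eq_theory :: "('f \<Rightarrow> nat) \<Rightarrow> ('f,nat) trm rel \<Rightarrow> bool" where
  "eq_theory ar E \<longleftrightarrow> (\<forall>(l,r)\<in>E. wf_trm ar l \<and> wf_trm ar r)"

inductive eqv :: "('f \<Rightarrow> nat) \<Rightarrow> ('f,nat) trm rel \<Rightarrow> ('f,'v) trm \<Rightarrow> ('f,'v) trm \<Rightarrow> bool"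
  for ar E where
  eqv_refl: "eqv ar E t t"
| eqv_sym: "eqv ar E s t \<Longrightarrow> eqv ar E t s"
| eqv_trans: "eqv ar E s t \<Longrightarrow> eqv ar E t u \<Longrightarrow> eqv ar E s u"
| eqv_cong: "length ss = length ts \<Longrightarrow> (\<forall>i<length ts. eqv ar E (ss ! i) (ts ! i))
              \<Longrightarrow> eqv ar E (App f ss) (App f ts)"
| eqv_inst: "(l,r) \<in> E \<Longrightarrow> (\<forall>v. wf_trm ar (\<sigma> v))
              \<Longrightarrow> eqv ar E (subst_trm \<sigma> l) (subst_trm \<sigma> r)"

definition is_T_algebra :: "('f,nat) trm rel \<Rightarrow> ('f \<Rightarrow> 'b list \<Rightarrow> 'b) \<Rightarrow> bool" where
  "is_T_algebra E I \<longleftrightarrow> (\<forall>(l,r)\<in>E. \<forall>\<rho>. eval_trm I \<rho> l = eval_trm I \<rho> r)"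

text \<open>B finitely generated by B0: B0 finite and the T-algebra morphism TB0 \<rightarrow> B extending
  the inclusion (i.e. evaluation of terms over B0) is surjective.\<close>

definition fin_generated :: "('f \<Rightarrow> nat) \<Rightarrow> ('f \<Rightarrow> 'b list \<Rightarrow> 'b) \<Rightarrow> 'b set \<Rightarrow> bool" where
  "fin_generated ar I B0 \<longleftrightarrow> finite B0 \<and>
     (\<forall>b. \<exists>t. wf_trm ar t \<and> vars_trm t \<subseteq> B0 \<and> eval_trm I id t = b)"

text \<open>For an L-coalgebra (o, d), the unique morphism into B^(A*) maps x to w \<mapsto> o(d_w x),
  with d_eps x = x and d_(aw) x = d_w (d_a x).\<close>

definition trace :: "('c \<Rightarrow> 'b) \<Rightarrow> ('a \<Rightarrow> 'c \<Rightarrow> 'c) \<Rightarrow> 'c \<Rightarrow> 'a list \<Rightarrow> 'b" where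
  "trace out der x = (\<lambda>w. out (foldl (\<lambda>c a. der a c) x w))"

text \<open>The equivalence class of a term in TX (terms over X modulo the theory).\<close>

definition tclass :: "('f \<Rightarrow> nat) \<Rightarrow> ('f,nat) trm rel \<Rightarrow> 'x set \<Rightarrow> ('f,'x) trm \<Rightarrow> ('f,'x) trm set" where
  "tclass ar E X t = {s. wf_trm ar s \<and> vars_trm s \<subseteq> X \<and> eqv ar E t s}"

definition TSet :: "('f \<Rightarrow> nat) \<Rightarrow> ('f,nat) trm rel \<Rightarrow> 'x set \<Rightarrow> ('f,'x) trm set set" where
  "TSet ar E X = {tclass ar E X t | t. wf_trm ar t \<and> vars_trm t \<subseteq> X}"

definition rep :: "('f,'x) trm set \<Rightarrow> ('f,'x) trm" where
  "rep c = (SOME t. t \<in> c)"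

text \<open>A T-automaton with output algebra B (given by I): finite state set X,
  output map om : X \<Rightarrow> B, transitions tm : A \<times> X \<Rightarrow> TX.\<close>

definition is_T_automaton :: "('f \<Rightarrow> nat) \<Rightarrow> ('f,nat) trm rel \<Rightarrow> 'x set
     \<Rightarrow> ('a \<Rightarrow> 'x \<Rightarrow> ('f,'x) trm set) \<Rightarrow> bool" where
  "is_T_automaton ar E X tm \<longleftrightarrow> finite X \<and> (\<forall>a. \<forall>x\<in>X. tm a x \<in> TSet ar E X)"

text \<open>The L-coalgebra structure m# on TX: the T-algebra morphism extending
  eta(x) \<mapsto> (om x, \<lambda>a. tm a x); computed on representatives.\<close>

definition aut_out :: "('f \<Rightarrow> 'b list \<Rightarrow> 'b) \<Rightarrow> ('x \<Rightarrow> 'b) \<Rightarrow> ('f,'x) trm set \<Rightarrow> 'b" where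
  "aut_out I om c = eval_trm I om (rep c)"

definition aut_der :: "('f \<Rightarrow> nat) \<Rightarrow> ('f,nat) trm rel \<Rightarrow> 'x set
     \<Rightarrow> ('a \<Rightarrow> 'x \<Rightarrow> ('f,'x) trm set) \<Rightarrow> 'a \<Rightarrow> ('f,'x) trm set \<Rightarrow> ('f,'x) trm set" where
  "aut_der ar E X tm a c = tclass ar E X (subst_trm (\<lambda>x. rep (tm a x)) (rep c))"

definition aut_sem :: "('f \<Rightarrow> nat) \<Rightarrow> ('f,nat) trm rel \<Rightarrow> ('f \<Rightarrow> 'b list \<Rightarrow> 'b) \<Rightarrow> 'x set
     \<Rightarrow> ('x \<Rightarrow> 'b) \<Rightarrow> ('a \<Rightarrow> 'x \<Rightarrow> ('f,'x) trm set) \<Rightarrow> 'x \<Rightarrow> 'a list \<Rightarrow> 'b" where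
  "aut_sem ar E I X om tm x = trace (aut_out I om) (aut_der ar E X tm) (tclass ar E X (Var x))"

text \<open>RMu x br beta stands for  mu x. (a1.br(a1) \<pitchfork> ... \<pitchfork> an.br(an) \<pitchfork> beta).\<close>

datatype ('f,'a,'b) rexp =
    RVar nat
  | RMu nat "'a \<Rightarrow> ('f,'a,'b) rexp" "('f,'b) trm"
  | RApp 'f "('f,'a,'b) rexp list"

primrec fv_rexp :: "('f,'a,'b) rexp \<Rightarrow> nat set" where
  "fv_rexp (RVar x) = {x}"
| "fv_rexp (RMu x br \<beta>) = (\<Union> (range (\<lambda>a. fv_rexp (br a)))) - {x}"
| "fv_rexp (RApp f es) = \<Union> (set (map fv_rexp es))"

primrec wf_rexp :: "('f \<Rightarrow> nat) \<Rightarrow> 'b set \<Rightarrow> ('f,'a,'b) rexp \<Rightarrow> bool" where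
  "wf_rexp ar B0 (RVar x) = True"
| "wf_rexp ar B0 (RMu x br \<beta>) =
     ((\<forall>a. wf_rexp ar B0 (br a)) \<and> wf_trm ar \<beta> \<and> vars_trm \<beta> \<subseteq> B0)"
| "wf_rexp ar B0 (RApp f es) = (length es = ar f \<and> list_all id (map (wf_rexp ar B0) es))"

definition reactive :: "('f \<Rightarrow> nat) \<Rightarrow> 'b set \<Rightarrow> ('f,'a,'b) rexp \<Rightarrow> bool" where
  "reactive ar B0 e \<longleftrightarrow> fv_rexp e = {} \<and> wf_rexp ar B0 e"

text \<open>Substitution of a (closed) expression g for the free variable x.\<close>

primrec subst_rexp :: "nat \<Rightarrow> ('f,'a,'b) rexp \<Rightarrow> ('f,'a,'b) rexp \<Rightarrow> ('f,'a,'b) rexp" where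
  "subst_rexp x g (RVar y) = (if y = x then g else RVar y)"
| "subst_rexp x g (RMu y br \<beta>) =
     (if y = x then RMu y br \<beta> else RMu y (\<lambda>a. subst_rexp x g (br a)) \<beta>)"
| "subst_rexp x g (RApp f es) = RApp f (map (subst_rexp x g) es)"

primrec rexp_out :: "('f \<Rightarrow> 'b list \<Rightarrow> 'b) \<Rightarrow> ('f,'a,'b) rexp \<Rightarrow> 'b" where
  "rexp_out I (RVar x) = undefined"
| "rexp_out I (RMu x br \<beta>) = eval_trm I id \<beta>"
| "rexp_out I (RApp f es) = I f (map (rexp_out I) es)"

primrec rexp_der :: "'a \<Rightarrow> ('f,'a,'b) rexp \<Rightarrow> ('f,'a,'b) rexp" where
  "rexp_der a (RVar x) = RVar x"
| "rexp_der a (RMu x br \<beta>) = subst_rexp x (RMu x br \<beta>) (br a)"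
| "rexp_der a (RApp f es) = RApp f (map (rexp_der a) es)"

definition rexp_sem :: "('f \<Rightarrow> 'b list \<Rightarrow> 'b) \<Rightarrow> ('f,'a,'b) rexp \<Rightarrow> 'a list \<Rightarrow> 'b" where
  "rexp_sem I e = trace (rexp_out I) rexp_der e"

end

theory Submission
  imports Defs
begin

text \<open>Both directions rest on one simulation principle (locale \<open>leaf_simulation\<close>). Let S be a
  set of \<open>\<mu>\<close>-expressions, each labelled by a state of a T-automaton with the same output, such
  that the derivative of every element of S is a \<open>\<Sigma>\<close>-tree over S whose labelling represents the
  corresponding transition. Then every \<open>\<Sigma>\<close>-tree over S has the trace of the class of its
  labelling in TX, because the coalgebra structure of TX is a T-algebra morphism and equal terms
  have equal values in B.

  From expressions to automata: the \<open>\<mu>\<close>-subexpressions of e, closed by substituting the enclosing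
  fixpoints, form a finite set S of this kind, since unfolding \<open>\<mu>x.\<delta>\<close> only substitutes elements of
  S into \<open>\<delta>\<close>; they become the states, together with one more state for e itself.

  From automata to expressions: a state y is represented by the fixpoint \<open>\<mu>y\<close> whose a-branch is
  a representative of the transition of y with the states not bound yet unfolded in the same way,
  and whose output is a term over \<open>B\<^sub>0\<close> denoting the output of y, which exists since \<open>B\<^sub>0\<close>
  generates B. The closed instances of these unfoldings again form a set S as above.\<close>

lemma subst_trm_subst_trm:
  "subst_trm \<sigma> (subst_trm \<tau> t) = subst_trm (\<lambda>v. subst_trm \<sigma> (\<tau> v)) t"
  by (induction t) auto

lemma wf_trm_subst_trm: "wf_trm ar t \<Longrightarrow> (\<And>v. wf_trm ar (\<sigma> v)) \<Longrightarrow> wf_trm ar (subst_trm \<sigma> t)"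
  by (induction t) auto

lemma eval_trm_subst_trm:
  "eval_trm I \<rho> (subst_trm \<sigma> t) = eval_trm I (\<lambda>v. eval_trm I \<rho> (\<sigma> v)) t"
  by (induction t) (simp_all cong: map_cong)

lemma subst_trm_cong:
  "(\<And>v. v \<in> vars_trm t \<Longrightarrow> \<sigma> v = \<sigma>' v) \<Longrightarrow> subst_trm \<sigma> t = subst_trm \<sigma>' t"
  by (induction t) auto

lemma subst_trm_Var: "(\<And>v. v \<in> vars_trm t \<Longrightarrow> \<sigma> v = Var v) \<Longrightarrow> subst_trm \<sigma> t = t"
  by (induction t) (auto intro: map_idI)

lemma eval_trm_eqv:
  assumes "is_T_algebra E I"
  shows "eqv ar E s t \<Longrightarrow> eval_trm I \<rho> s = eval_trm I \<rho> t"
proof (induction rule: eqv.induct)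
  case (eqv_cong ss ts f)
  then show ?case by (auto intro!: nth_equalityI arg_cong[where f = "I f"])
next
  case (eqv_inst l r \<sigma>)
  then show ?case using assms by (auto simp: eval_trm_subst_trm is_T_algebra_def)
qed auto

lemma eqv_subst_trm:
  assumes "\<And>v. wf_trm ar (\<sigma> v)"
  shows "eqv ar E s t \<Longrightarrow> eqv ar E (subst_trm \<sigma> s) (subst_trm \<sigma> t)"
proof (induction rule: eqv.induct)
  case (eqv_inst l r \<tau>)
  have "eqv ar E (subst_trm (\<lambda>v. subst_trm \<sigma> (\<tau> v)) l) (subst_trm (\<lambda>v. subst_trm \<sigma> (\<tau> v)) r)"
    using eqv_inst assms by (intro eqv.eqv_inst) (auto intro: wf_trm_subst_trm)
  then show ?case by (simp add: subst_trm_subst_trm)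
qed (auto intro: eqv.intros)

lemma tclass_eqI: "eqv ar E s t \<Longrightarrow> tclass ar E X s = tclass ar E X t"
  unfolding tclass_def by (blast intro: eqv_trans eqv_sym)

lemma rep_tclass:
  "wf_trm ar t \<Longrightarrow> vars_trm t \<subseteq> X \<Longrightarrow> rep (tclass ar E X t) \<in> tclass ar E X t"
  unfolding rep_def by (rule someI[of _ t]) (auto simp: tclass_def intro: eqv_refl)

lemma rep_TSet:
  assumes "c \<in> TSet ar E X"
  shows "rep c \<in> c" "wf_trm ar (rep c)" "vars_trm (rep c) \<subseteq> X"
proof -
  obtain t where t: "wf_trm ar t" "vars_trm t \<subseteq> X" "c = tclass ar E X t"
    using assms by (auto simp: TSet_def)
  show "rep c \<in> c" using rep_tclass[OF t(1,2)] t(3) by simp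
  then show "wf_trm ar (rep c)" "vars_trm (rep c) \<subseteq> X" using t(3) by (simp_all add: tclass_def)
qed

lemma tclass_rep:
  assumes "c \<in> TSet ar E X"
  shows "tclass ar E X (rep c) = c"
proof -
  obtain t where t: "c = tclass ar E X t" using assms by (auto simp: TSet_def)
  then have "eqv ar E t (rep c)" using rep_TSet(1)[OF assms] by (simp add: tclass_def)
  then show ?thesis using t by (metis tclass_eqI)
qed

lemma aut_out_tclass:
  assumes "is_T_algebra E I" "wf_trm ar t" "vars_trm t \<subseteq> X"
  shows "aut_out I om (tclass ar E X t) = eval_trm I om t"
proof -
  have "eqv ar E t (rep (tclass ar E X t))"
    using rep_tclass[OF assms(2,3)] by (simp add: tclass_def)
  then show ?thesis unfolding aut_out_def by (metis eval_trm_eqv[OF assms(1)])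
qed

lemma aut_der_tclass:
  assumes aut: "is_T_automaton ar E X tm" and t: "wf_trm ar t" "vars_trm t \<subseteq> X"
  shows "aut_der ar E X tm a (tclass ar E X t) = tclass ar E X (subst_trm (\<lambda>x. rep (tm a x)) t)"
proof -
  define r where "r = rep (tclass ar E X t)"
  have r: "eqv ar E t r" "vars_trm r \<subseteq> X"
    using rep_tclass[OF t, of E] unfolding r_def tclass_def by auto
  \<comment> \<open>outside X the substitution is patched to be well-formed, as \<open>eqv_subst_trm\<close> requires\<close>
  define \<sigma> where "\<sigma> x = (if x \<in> X then rep (tm a x) else Var x)" for x
  have "wf_trm ar (\<sigma> x)" for x
    using aut rep_TSet(2)[of "tm a x" ar E X] unfolding \<sigma>_def is_T_automaton_def by auto
  then have "eqv ar E (subst_trm \<sigma> t) (subst_trm \<sigma> r)" by (rule eqv_subst_trm[OF _ r(1)])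
  moreover have "subst_trm \<sigma> s = subst_trm (\<lambda>x. rep (tm a x)) s" if "vars_trm s \<subseteq> X" for s
    using that by (intro subst_trm_cong) (auto simp: \<sigma>_def)
  ultimately show ?thesis
    using t(2) r(2) unfolding aut_der_def r_def[symmetric] by (metis tclass_eqI eqv_sym)
qed

lemma trace_Nil: "trace out der x [] = out x"
  by (simp add: trace_def)

lemma trace_Cons: "trace out der x (a # w) = trace out der (der a x) w"
  by (simp add: trace_def)

lemma trace_simulation:
  assumes out: "\<And>x. R x \<Longrightarrow> out' (g x) = out x"
    and der: "\<And>x a. R x \<Longrightarrow> R (der a x) \<and> g (der a x) = der' a (g x)"
    and "R x"
  shows "trace out der x = trace out' der' (g x)"
proof
  fix w show "trace out der x w = trace out' der' (g x) w"
    using \<open>R x\<close> by (induction w arbitrary: x) (simp_all add: trace_Nil trace_Cons out der)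
qed

lemma aut_sem_Nil:
  "is_T_algebra E I \<Longrightarrow> x \<in> X \<Longrightarrow> aut_sem ar E I X om tm x [] = om x"
  by (simp add: aut_sem_def trace_Nil aut_out_tclass)

lemma aut_sem_Cons:
  assumes "is_T_automaton ar E X tm" "x \<in> X"
  shows "aut_sem ar E I X om tm x (a # w) = trace (aut_out I om) (aut_der ar E X tm) (tm a x) w"
proof -
  have "tm a x \<in> TSet ar E X" using assms by (simp add: is_T_automaton_def)
  then show ?thesis
    using aut_der_tclass[OF assms(1), of "Var x"] assms(2)
    by (simp add: aut_sem_def trace_Cons tclass_rep)
qed

primrec subst_rexp_on ::
    "(nat \<Rightarrow> ('f,'a,'b) rexp) \<Rightarrow> nat set \<Rightarrow> ('f,'a,'b) rexp \<Rightarrow> ('f,'a,'b) rexp" where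
  "subst_rexp_on \<theta> D (RVar n) = (if n \<in> D then \<theta> n else RVar n)"
| "subst_rexp_on \<theta> D (RMu n br \<beta>) = RMu n (\<lambda>a. subst_rexp_on \<theta> (D - {n}) (br a)) \<beta>"
| "subst_rexp_on \<theta> D (RApp f es) = RApp f (map (subst_rexp_on \<theta> D) es)"

lemma fv_subst_rexp_on:
  "(\<And>v. v \<in> D \<Longrightarrow> fv_rexp (\<theta> v) = {}) \<Longrightarrow> fv_rexp (subst_rexp_on \<theta> D e) = fv_rexp e - D"
proof (induction e arbitrary: D)
  case (RMu n br \<beta>)
  have "fv_rexp (subst_rexp_on \<theta> (D - {n}) (br a)) = fv_rexp (br a) - (D - {n})" for a
    by (rule RMu.IH[OF rangeI]) (use RMu.prems in simp)
  then show ?case by auto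
qed auto

lemma subst_rexp_fresh: "x \<notin> fv_rexp e \<Longrightarrow> subst_rexp x g e = e"
  by (induction e) (auto intro: map_idI)

lemma subst_rexp_on_fresh: "fv_rexp e \<inter> D = {} \<Longrightarrow> subst_rexp_on \<theta> D e = e"
proof (induction e arbitrary: D)
  case (RMu n br \<beta>)
  have "subst_rexp_on \<theta> (D - {n}) (br a) = br a" for a
    by (rule RMu.IH[OF rangeI]) (use RMu.prems in auto)
  then show ?case by simp
qed (auto intro!: map_idI)

lemma subst_rexp_on_cong:
  "(\<And>v. v \<in> D \<Longrightarrow> \<theta> v = \<theta>' v) \<Longrightarrow> subst_rexp_on \<theta> D e = subst_rexp_on \<theta>' D e"
proof (induction e arbitrary: D)
  case (RMu n br \<beta>)
  have "subst_rexp_on \<theta> (D - {n}) (br a) = subst_rexp_on \<theta>' (D - {n}) (br a)" for a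
    by (rule RMu.IH[OF rangeI]) (use RMu.prems in simp)
  then show ?case by simp
qed auto

lemma subst_rexp_subst_rexp_on:
  assumes "\<And>v. v \<in> D \<Longrightarrow> fv_rexp (\<theta> v) = {}" and "fv_rexp g = {}" and "x \<notin> D"
  shows "subst_rexp x g (subst_rexp_on \<theta> D e) = subst_rexp_on (\<theta>(x := g)) (insert x D) e"
  using assms
proof (induction e arbitrary: D)
  case (RMu n br \<beta>)
  show ?case
  proof (cases "n = x")
    case True
    have "subst_rexp_on \<theta> (D - {x}) (br a) =
        subst_rexp_on (\<theta>(x := g)) (insert x D - {x}) (br a)" for a
      using RMu.prems(3) by (auto intro: subst_rexp_on_cong simp: insert_Diff_if)
    then show ?thesis using True by (simp del: fun_upd_apply)
  next
    case False
    have "subst_rexp x g (subst_rexp_on \<theta> (D - {n}) (br a))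
        = subst_rexp_on (\<theta>(x := g)) (insert x D - {n}) (br a)" for a
      using False by (subst RMu.IH[OF rangeI]) (use RMu.prems in \<open>auto simp: insert_Diff_if\<close>)
    then show ?thesis using False by (simp del: fun_upd_apply)
  qed
qed (auto simp: subst_rexp_fresh)

lemma rexp_der_subst_rexp_on_RMu:
  assumes "\<And>v. v \<in> D \<Longrightarrow> fv_rexp (\<theta> v) = {}" and "fv_rexp \<gamma> = {}"
    and \<gamma>: "\<gamma> = subst_rexp_on \<theta> D (RMu x br \<beta>)"
  shows "rexp_der a \<gamma> = subst_rexp_on (\<theta>(x := \<gamma>)) (insert x D) (br a)"
proof -
  have "rexp_der a \<gamma> = subst_rexp x \<gamma> (subst_rexp_on \<theta> (D - {x}) (br a))"
    unfolding \<gamma> by simp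
  also have "\<dots> = subst_rexp_on (\<theta>(x := \<gamma>)) (insert x (D - {x})) (br a)"
    using assms(1,2) by (intro subst_rexp_subst_rexp_on) auto
  finally show ?thesis by simp
qed

inductive sigma_tree :: "('f \<Rightarrow> nat) \<Rightarrow> ('f,'a,'b) rexp set \<Rightarrow> ('f,'a,'b) rexp \<Rightarrow> bool"
  for ar S where
  leaf: "RMu n br \<beta> \<in> S \<Longrightarrow> sigma_tree ar S (RMu n br \<beta>)"
| node: "length es = ar f \<Longrightarrow> (\<And>e. e \<in> set es \<Longrightarrow> sigma_tree ar S e) \<Longrightarrow> sigma_tree ar S (RApp f es)"

primrec rexp_to_trm :: "(('f,'a,'b) rexp \<Rightarrow> 'x) \<Rightarrow> ('f,'a,'b) rexp \<Rightarrow> ('f,'x) trm" where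
  "rexp_to_trm lab (RVar n) = Var (lab (RVar n))"
| "rexp_to_trm lab (RMu n br \<beta>) = Var (lab (RMu n br \<beta>))"
| "rexp_to_trm lab (RApp f es) = App f (map (rexp_to_trm lab) es)"

primrec trm_to_rexp :: "('x \<Rightarrow> ('f,'a,'b) rexp) \<Rightarrow> ('f,'x) trm \<Rightarrow> ('f,'a,'b) rexp" where
  "trm_to_rexp l (Var x) = l x"
| "trm_to_rexp l (App f ts) = RApp f (map (trm_to_rexp l) ts)"

lemma sigma_tree_rexp_der:
  "sigma_tree ar S t \<Longrightarrow> (\<And>\<gamma>. \<gamma> \<in> S \<Longrightarrow> sigma_tree ar S (rexp_der a \<gamma>)) \<Longrightarrow>
   sigma_tree ar S (rexp_der a t)"
proof (induction rule: sigma_tree.induct)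
  case (leaf n br \<beta>)
  then show ?case by blast
qed (auto intro!: sigma_tree.node)

lemma rexp_to_trm_wf:
  "sigma_tree ar S t \<Longrightarrow> lab ` S \<subseteq> X \<Longrightarrow>
   wf_trm ar (rexp_to_trm lab t) \<and> vars_trm (rexp_to_trm lab t) \<subseteq> X"
  by (induction rule: sigma_tree.induct) auto

lemma sigma_tree_trm_to_rexp:
  "wf_trm ar t \<Longrightarrow> (\<And>x. x \<in> vars_trm t \<Longrightarrow> sigma_tree ar S (l x)) \<Longrightarrow> sigma_tree ar S (trm_to_rexp l t)"
  by (induction t) (force intro!: sigma_tree.node)+

lemma rexp_to_trm_trm_to_rexp:
  "rexp_to_trm lab (trm_to_rexp l t) = subst_trm (\<lambda>x. rexp_to_trm lab (l x)) t"
  by (induction t) auto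

lemma fv_trm_to_rexp: "fv_rexp (trm_to_rexp l t) = (\<Union>x\<in>vars_trm t. fv_rexp (l x))"
  by (induction t) auto

lemma wf_trm_to_rexp:
  "wf_trm ar t \<Longrightarrow> (\<And>x. x \<in> vars_trm t \<Longrightarrow> wf_rexp ar B0 (l x)) \<Longrightarrow> wf_rexp ar B0 (trm_to_rexp l t)"
  by (induction t) (auto simp: list_all_iff)

lemma subst_rexp_on_trm_to_rexp:
  "subst_rexp_on \<theta> D (trm_to_rexp l t) = trm_to_rexp (\<lambda>x. subst_rexp_on \<theta> D (l x)) t"
  by (induction t) auto

locale leaf_simulation =
  fixes ar :: "'f \<Rightarrow> nat" and E :: "('f,nat) trm rel" and I :: "'f \<Rightarrow> 'b list \<Rightarrow> 'b"
    and X :: "'x set" and om :: "'x \<Rightarrow> 'b" and tm :: "'a \<Rightarrow> 'x \<Rightarrow> ('f,'x) trm set"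
    and S :: "('f,'a,'b) rexp set" and lab :: "('f,'a,'b) rexp \<Rightarrow> 'x"
  assumes T_algebra: "is_T_algebra E I"
    and automaton: "is_T_automaton ar E X tm"
    and lab_in: "\<And>\<gamma>. \<gamma> \<in> S \<Longrightarrow> lab \<gamma> \<in> X"
    and out_leaf: "\<And>\<gamma>. \<gamma> \<in> S \<Longrightarrow> om (lab \<gamma>) = rexp_out I \<gamma>"
    and sigma_tree_der_leaf: "\<And>\<gamma> a. \<gamma> \<in> S \<Longrightarrow> sigma_tree ar S (rexp_der a \<gamma>)"
    and tm_leaf: "\<And>\<gamma> a. \<gamma> \<in> S \<Longrightarrow> tm a (lab \<gamma>) = tclass ar E X (rexp_to_trm lab (rexp_der a \<gamma>))"
begin

lemma wf_rexp_to_trm: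
  assumes "sigma_tree ar S t"
  shows "wf_trm ar (rexp_to_trm lab t)" "vars_trm (rexp_to_trm lab t) \<subseteq> X"
  using rexp_to_trm_wf[OF assms, of lab X] lab_in by blast+

lemma rexp_out_sigma_tree: "sigma_tree ar S t \<Longrightarrow> rexp_out I t = eval_trm I om (rexp_to_trm lab t)"
proof (induction rule: sigma_tree.induct)
  case (leaf n br \<beta>)
  then show ?case using out_leaf by simp
next
  case (node es f)
  then show ?case by (simp cong: map_cong)
qed

lemma rexp_to_trm_rexp_der:
  "sigma_tree ar S t \<Longrightarrow>
   eqv ar E (rexp_to_trm lab (rexp_der a t)) (subst_trm (\<lambda>x. rep (tm a x)) (rexp_to_trm lab t))"
proof (induction rule: sigma_tree.induct)
  case (leaf n br \<beta>)
  have "rep (tm a (lab (RMu n br \<beta>))) \<in> tclass ar E X (rexp_to_trm lab (rexp_der a (RMu n br \<beta>)))"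
    using rep_tclass[OF wf_rexp_to_trm[OF sigma_tree_der_leaf[OF leaf]]] tm_leaf[OF leaf] by simp
  then show ?case by (simp add: tclass_def)
next
  case (node es f)
  then show ?case by (auto intro!: eqv.eqv_cong)
qed

lemma rexp_sem_sigma_tree:
  assumes "sigma_tree ar S t"
  shows "rexp_sem I t = trace (aut_out I om) (aut_der ar E X tm) (tclass ar E X (rexp_to_trm lab t))"
  unfolding rexp_sem_def
proof (rule trace_simulation[where R = "sigma_tree ar S"])
  fix t assume t: "sigma_tree ar S t"
  show "aut_out I om (tclass ar E X (rexp_to_trm lab t)) = rexp_out I t"
    using wf_rexp_to_trm[OF t] rexp_out_sigma_tree[OF t] aut_out_tclass[OF T_algebra] by simp
  fix a
  show "sigma_tree ar S (rexp_der a t) \<and>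
      tclass ar E X (rexp_to_trm lab (rexp_der a t)) =
        aut_der ar E X tm a (tclass ar E X (rexp_to_trm lab t))"
    using sigma_tree_rexp_der[OF t sigma_tree_der_leaf] wf_rexp_to_trm[OF t]
      rexp_to_trm_rexp_der[OF t, of a]
      aut_der_tclass[OF automaton] tclass_eqI by metis
qed (fact assms)

lemma rexp_sem_eq_aut_sem:
  assumes t: "sigma_tree ar S t" and x: "x \<in> X" and "om x = rexp_out I t"
    and "\<And>a. tm a x = tclass ar E X (rexp_to_trm lab (rexp_der a t))"
  shows "rexp_sem I t = aut_sem ar E I X om tm x"
proof
  fix w show "rexp_sem I t w = aut_sem ar E I X om tm x w"
  proof (cases w)
    case Nil
    then show ?thesis
      using aut_sem_Nil[OF T_algebra x, of ar om tm] assms(3) by (simp add: rexp_sem_def trace_Nil)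
  next
    case (Cons a w')
    have "rexp_sem I (rexp_der a t) = trace (aut_out I om) (aut_der ar E X tm) (tm a x)"
      using rexp_sem_sigma_tree[OF sigma_tree_rexp_der[OF t sigma_tree_der_leaf]] assms(4) by simp
    then show ?thesis
      using aut_sem_Cons[OF automaton x, of I om] Cons by (simp add: rexp_sem_def trace_Cons)
  qed
qed

end

primrec mu_instances ::
    "('f,'a,'b) rexp \<Rightarrow> (nat \<Rightarrow> ('f,'a,'b) rexp) \<Rightarrow> ('f,'a,'b) rexp set" where
  "mu_instances (RVar n) \<theta> = {}"
| "mu_instances (RMu n br \<beta>) \<theta> = insert (subst_rexp_on \<theta> UNIV (RMu n br \<beta>))
      (\<Union>a. mu_instances (br a) (\<theta>(n := subst_rexp_on \<theta> UNIV (RMu n br \<beta>))))"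
| "mu_instances (RApp f es) \<theta> = \<Union> (set (map (\<lambda>e. mu_instances e \<theta>) es))"

lemma finite_mu_instances: "finite (mu_instances (e :: ('f,'a::finite,'b) rexp) \<theta>)"
  by (induction e arbitrary: \<theta>) auto

lemma sigma_tree_mu_instances:
  assumes "\<And>v. fv_rexp (\<theta> v) = {}" and "mu_instances \<delta> \<theta> \<subseteq> S"
    and "\<And>v. v \<in> fv_rexp \<delta> \<Longrightarrow> sigma_tree ar S (\<theta> v)" and "wf_rexp ar B0 \<delta>"
  shows "sigma_tree ar S (subst_rexp_on \<theta> UNIV \<delta>) \<and>
    (\<forall>\<gamma>\<in>mu_instances \<delta> \<theta>. \<forall>a. sigma_tree ar S (rexp_der a \<gamma>))"
  using assms
proof (induction \<delta> arbitrary: \<theta>)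
  case (RVar n)
  then show ?case by simp
next
  case (RApp f es)
  have "sigma_tree ar S (subst_rexp_on \<theta> UNIV e) \<and>
      (\<forall>\<gamma>\<in>mu_instances e \<theta>. \<forall>a. sigma_tree ar S (rexp_der a \<gamma>))"
    if "e \<in> set es" for e
    using RApp.prems that by (intro RApp.IH) (auto simp: list_all_iff, blast)
  then show ?case using RApp.prems(4) by (auto intro!: sigma_tree.node)
next
  case (RMu n br \<beta>)
  define \<gamma> where "\<gamma> = subst_rexp_on \<theta> UNIV (RMu n br \<beta>)"
  define \<theta>' where "\<theta>' = \<theta>(n := \<gamma>)"
  have \<gamma>_closed: "fv_rexp \<gamma> = {}"
    unfolding \<gamma>_def using fv_subst_rexp_on[of UNIV \<theta> "RMu n br \<beta>"] RMu.prems(1) by simp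
  have instances: "mu_instances (RMu n br \<beta>) \<theta> = insert \<gamma> (\<Union>a. mu_instances (br a) \<theta>')"
    by (simp add: \<gamma>_def \<theta>'_def)
  have "\<gamma> \<in> S" using RMu.prems(2) unfolding instances by simp
  then have \<gamma>_sigma_tree: "sigma_tree ar S \<gamma>" by (simp add: \<gamma>_def sigma_tree.leaf)
  have IH: "sigma_tree ar S (subst_rexp_on \<theta>' UNIV (br a)) \<and>
      (\<forall>\<gamma>\<in>mu_instances (br a) \<theta>'. \<forall>b. sigma_tree ar S (rexp_der b \<gamma>))" for a
  proof (rule RMu.IH[OF rangeI])
    show "fv_rexp (\<theta>' v) = {}" for v using RMu.prems(1) \<gamma>_closed by (simp add: \<theta>'_def)
    show "mu_instances (br a) \<theta>' \<subseteq> S" using RMu.prems(2) unfolding instances by blast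
    show "sigma_tree ar S (\<theta>' v)" if "v \<in> fv_rexp (br a)" for v
      using RMu.prems(3) that \<gamma>_sigma_tree by (auto simp: \<theta>'_def)
    show "wf_rexp ar B0 (br a)" using RMu.prems(4) by simp
  qed
  have "rexp_der a \<gamma> = subst_rexp_on \<theta>' UNIV (br a)" for a
    using rexp_der_subst_rexp_on_RMu[OF _ \<gamma>_closed \<gamma>_def] RMu.prems(1) by (simp add: \<theta>'_def)
  then show ?case using \<gamma>_sigma_tree IH unfolding instances \<gamma>_def[symmetric] by auto
qed

lemma automaton_of_reactive:
  fixes e :: "('f,'a::finite,'b) rexp"
  assumes alg: "is_T_algebra E I" and e: "reactive ar B0 e"
  shows "\<exists>(X :: nat set) om tm x. is_T_automaton ar E X tm \<and> x \<in> X \<and>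
           rexp_sem I e = aut_sem ar E I X om tm x"
proof -
  define S where "S = mu_instances e (\<lambda>_. e)"
  have closed: "fv_rexp e = {}" and wf: "wf_rexp ar B0 e" using e by (simp_all add: reactive_def)
  have "sigma_tree ar S e" and der_S: "\<And>\<gamma> a. \<gamma> \<in> S \<Longrightarrow> sigma_tree ar S (rexp_der a \<gamma>)"
    using sigma_tree_mu_instances[of "\<lambda>_. e" e S ar B0] closed wf subst_rexp_on_fresh[of e UNIV]
    by (auto simp: S_def)
  then have der_e: "sigma_tree ar S (rexp_der a e)" for a by (rule sigma_tree_rexp_der)
  define N where "N = card S"
  obtain enc where enc: "bij_betw enc S {0..<N}"
    using ex_bij_betw_finite_nat finite_mu_instances unfolding N_def S_def by blast
  \<comment> \<open>states below N are the elements of S, and N is an extra state for e itself\<close>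
  define X where "X = {..N}"
  define expr where "expr k = (if k < N then inv_into S enc k else e)" for k
  define om where "om k = rexp_out I (expr k)" for k
  define tm where "tm a k = tclass ar E X (rexp_to_trm enc (rexp_der a (expr k)))" for a k
  have expr_enc: "enc \<gamma> < N" "expr (enc \<gamma>) = \<gamma>" if "\<gamma> \<in> S" for \<gamma>
    using enc that by (auto simp: expr_def bij_betw_def)
  have enc_X: "enc ` S \<subseteq> X" using expr_enc(1) by (force simp: X_def)
  have "sigma_tree ar S (rexp_der a (expr k))" for a k
    using der_e der_S bij_betw_apply[OF bij_betw_inv_into[OF enc]] by (simp add: expr_def)
  then have "tm a k \<in> TSet ar E X" for a k
    using rexp_to_trm_wf[OF _ enc_X] unfolding tm_def TSet_def by blast
  then have aut: "is_T_automaton ar E X tm" by (simp add: is_T_automaton_def X_def)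
  interpret leaf_simulation ar E I X om tm S enc
    using alg aut enc_X der_S by unfold_locales (auto simp: om_def tm_def expr_enc)
  have N: "N \<in> X" by (simp add: X_def)
  have "rexp_sem I e = aut_sem ar E I X om tm N"
    by (rule rexp_sem_eq_aut_sem[OF \<open>sigma_tree ar S e\<close> N])
      (simp_all add: om_def tm_def expr_def)
  then show ?thesis using aut N by blast
qed

locale automaton_unfolding =
  fixes ar :: "'f \<Rightarrow> nat" and E :: "('f,nat) trm rel" and I :: "'f \<Rightarrow> 'b list \<Rightarrow> 'b"
    and B0 :: "'b set" and X :: "'x set" and om :: "'x \<Rightarrow> 'b"
    and tm :: "'a \<Rightarrow> 'x \<Rightarrow> ('f,'x) trm set"
    and enc :: "'x \<Rightarrow> nat" and \<beta> :: "'x \<Rightarrow> ('f,'b) trm"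
  assumes T_algebra: "is_T_algebra E I"
    and automaton: "is_T_automaton ar E X tm"
    and enc_inj: "inj_on enc X"
    and \<beta>: "\<And>y. wf_trm ar (\<beta> y) \<and> vars_trm (\<beta> y) \<subseteq> B0 \<and> eval_trm I id (\<beta> y) = om y"
begin

definition trans_trm :: "'a \<Rightarrow> 'x \<Rightarrow> ('f,'x) trm" where
  "trans_trm a y = rep (tm a y)"

lemma tm_TSet: "y \<in> X \<Longrightarrow> tm a y \<in> TSet ar E X"
  using automaton by (simp add: is_T_automaton_def)

lemma trans_trm_wf:
  assumes "y \<in> X"
  shows "wf_trm ar (trans_trm a y)" "vars_trm (trans_trm a y) \<subseteq> X"
  using rep_TSet[OF tm_TSet[OF assms]] unfolding trans_trm_def by auto

text \<open>The expression for state y when the states in V are already bound by enclosing \<open>\<mu>\<close>s: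
  the fuel n never runs out as long as \<open>card (X - V) < n\<close>.\<close>

primrec unfold_state :: "nat \<Rightarrow> 'x set \<Rightarrow> 'x \<Rightarrow> ('f,'a,'b) rexp" where
  "unfold_state 0 V y = RVar (enc y)"
| "unfold_state (Suc n) V y = (if y \<in> V then RVar (enc y)
      else RMu (enc y) (\<lambda>a. trm_to_rexp (unfold_state n (insert y V)) (trans_trm a y)) (\<beta> y))"

lemma card_Diff_insert_less:
  assumes "y \<in> X - V" and "card (X - V) < Suc m"
  shows "card (X - insert y V) < m"
proof -
  have "finite (X - V)" using automaton by (simp add: is_T_automaton_def)
  moreover have "X - insert y V = X - V - {y}" by blast
  ultimately show ?thesis using card_Suc_Diff1[of "X - V" y] assms by simp
qed

lemma unfold_state_RMu:
  assumes "y \<in> X - V" and "card (X - V) < n"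
  obtains m where "card (X - insert y V) < m"
    and "unfold_state n V y =
      RMu (enc y) (\<lambda>a. trm_to_rexp (unfold_state m (insert y V)) (trans_trm a y)) (\<beta> y)"
proof -
  obtain m where "n = Suc m" using assms(2) by (cases n) auto
  then show ?thesis using that assms card_Diff_insert_less by auto
qed

lemma fv_unfold_state: "y \<in> X \<Longrightarrow> card (X - V) < n \<Longrightarrow> fv_rexp (unfold_state n V y) \<subseteq> enc ` V"
proof (induction n arbitrary: V y)
  case (Suc m)
  show ?case
  proof (cases "y \<in> V")
    case False
    then have "card (X - insert y V) < m" using Suc.prems card_Diff_insert_less by blast
    then have "fv_rexp (trm_to_rexp (unfold_state m (insert y V)) (trans_trm a y))
        \<subseteq> enc ` insert y V" for a
      unfolding fv_trm_to_rexp using trans_trm_wf(2)[OF Suc.prems(1)] Suc.IH by blast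
    then show ?thesis using False by auto
  qed simp
qed simp

lemma wf_unfold_state: "y \<in> X \<Longrightarrow> wf_rexp ar B0 (unfold_state n V y)"
proof (induction n arbitrary: V y)
  case (Suc m)
  have "wf_rexp ar B0 (trm_to_rexp (unfold_state m (insert y V)) (trans_trm a y))" for a
    using trans_trm_wf[OF Suc.prems] by (intro wf_trm_to_rexp) (auto intro: Suc.IH)
  then show ?case using \<beta> by simp
qed simp

text \<open>\<open>unfolds y c\<close>: c is the unfolding of y relative to V, with the free variables of the
  bound states V replaced by closed expressions that unfold them in turn.\<close>

inductive unfolds :: "'x \<Rightarrow> ('f,'a,'b) rexp \<Rightarrow> bool" where
  "V \<subseteq> X \<Longrightarrow> y \<in> X - V \<Longrightarrow> card (X - V) < n \<Longrightarrow> (\<And>v. v \<in> V \<Longrightarrow> unfolds v (\<theta> (enc v)))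
   \<Longrightarrow> unfolds y (subst_rexp_on \<theta> (enc ` V) (unfold_state n V y))"

lemma unfolds_closed: "unfolds y c \<Longrightarrow> fv_rexp c = {}"
proof (induction rule: unfolds.induct)
  case (1 V y n \<theta>)
  then have "fv_rexp (subst_rexp_on \<theta> (enc ` V) (unfold_state n V y)) =
      fv_rexp (unfold_state n V y) - enc ` V"
    by (intro fv_subst_rexp_on) auto
  then show ?case using 1 fv_unfold_state[of y V n] by auto
qed

lemma unfolds_RMu:
  assumes "unfolds y c"
  shows "y \<in> X" and "\<exists>br. c = RMu (enc y) br (\<beta> y)"
proof -
  obtain V n \<theta> where c: "c = subst_rexp_on \<theta> (enc ` V) (unfold_state n V y)"
    and y: "y \<in> X - V" and n: "card (X - V) < n"
    using assms by (rule unfolds.cases) blast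
  then show "y \<in> X" by simp
  obtain m where "unfold_state n V y =
      RMu (enc y) (\<lambda>a. trm_to_rexp (unfold_state m (insert y V)) (trans_trm a y)) (\<beta> y)"
    using unfold_state_RMu[OF y n] by blast
  then show "\<exists>br. c = RMu (enc y) br (\<beta> y)" using c by simp
qed

lemma unfolds_subst_unfold_state:
  assumes "V \<subseteq> X" and "z \<in> X" and "card (X - V) < n"
    and "\<And>v. v \<in> V \<Longrightarrow> unfolds v (\<theta> (enc v))"
  shows "unfolds z (subst_rexp_on \<theta> (enc ` V) (unfold_state n V z))"
proof (cases "z \<in> V")
  case True
  then have "unfold_state n V z = RVar (enc z)" using assms(3) by (cases n) auto
  then show ?thesis using True assms(4) by simp
next
  case False
  then show ?thesis using assms by (auto intro: unfolds.intros[of V z n])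
qed

lemma unfolds_rexp_der:
  assumes "unfolds y c"
  obtains l where "rexp_der a c = trm_to_rexp l (trans_trm a y)"
    and "\<And>z. z \<in> X \<Longrightarrow> unfolds z (l z)"
  using assms
proof (cases rule: unfolds.cases)
  case (1 V n \<theta>)
  obtain m where m: "card (X - insert y V) < m"
    and unfold: "unfold_state n V y =
      RMu (enc y) (\<lambda>a. trm_to_rexp (unfold_state m (insert y V)) (trans_trm a y)) (\<beta> y)"
    using unfold_state_RMu[OF 1(3,4)] by blast
  define \<theta>' where "\<theta>' = \<theta>(enc y := c)"
  have "fv_rexp (\<theta> v) = {}" if "v \<in> enc ` V" for v
    using that 1(5) unfolds_closed by blast
  then have "rexp_der a c =
      subst_rexp_on \<theta>' (enc ` insert y V) (trm_to_rexp (unfold_state m (insert y V)) (trans_trm a y))"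
    using rexp_der_subst_rexp_on_RMu[OF _ unfolds_closed[OF assms]] 1(1) unfold
    by (simp add: \<theta>'_def)
  then have der: "rexp_der a c =
      trm_to_rexp (\<lambda>z. subst_rexp_on \<theta>' (enc ` insert y V) (unfold_state m (insert y V) z)) (trans_trm a y)"
    by (simp add: subst_rexp_on_trm_to_rexp)
  have \<theta>'_unfolds: "unfolds v (\<theta>' (enc v))" if "v \<in> insert y V" for v
  proof (cases "v = y")
    case True
    then show ?thesis using assms by (simp add: \<theta>'_def)
  next
    case False
    then have "v \<in> V" and "enc v \<noteq> enc y" using that 1(2,3) inj_on_eq_iff[OF enc_inj] by auto
    then show ?thesis using 1(5) by (simp add: \<theta>'_def)
  qed
  have "insert y V \<subseteq> X" using 1(2,3) by blast
  from unfolds_subst_unfold_state[OF this _ m \<theta>'_unfolds]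
  show ?thesis by (rule that[OF der])
qed

definition state_of :: "('f,'a,'b) rexp \<Rightarrow> 'x" where
  "state_of c = inv_into X enc (case c of RMu n br b \<Rightarrow> n)"

lemma state_of_RMu: "y \<in> X \<Longrightarrow> state_of (RMu (enc y) br b) = y"
  using enc_inj by (simp add: state_of_def)

lemma rexp_sem_unfolds:
  assumes "unfolds y c"
  shows "rexp_sem I c = aut_sem ar E I X om tm y"
proof -
  define S where "S = {c. \<exists>y. unfolds y c}"
  have leaf: "state_of c = y" "sigma_tree ar S c" if u: "unfolds y c" for y c
  proof -
    obtain br where c: "c = RMu (enc y) br (\<beta> y)" and "y \<in> X" using unfolds_RMu[OF u] by blast
    show "state_of c = y" using c \<open>y \<in> X\<close> state_of_RMu by simp
    show "sigma_tree ar S c" using u unfolding c S_def by (auto intro: sigma_tree.leaf)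
  qed
  interpret leaf_simulation ar E I X om tm S state_of
  proof unfold_locales
    fix c assume "c \<in> S"
    then obtain y where y: "unfolds y c" by (auto simp: S_def)
    have y_X: "y \<in> X" and state: "state_of c = y" using unfolds_RMu(1)[OF y] leaf(1)[OF y] .
    obtain br where c: "c = RMu (enc y) br (\<beta> y)" using unfolds_RMu(2)[OF y] by blast
    show "state_of c \<in> X" unfolding state by (fact y_X)
    show "om (state_of c) = rexp_out I c" using \<beta> state_of_RMu[OF y_X] by (simp add: c)
    fix a
    obtain l where der: "rexp_der a c = trm_to_rexp l (trans_trm a y)"
      and l: "\<And>z. z \<in> X \<Longrightarrow> unfolds z (l z)"
      using unfolds_rexp_der[OF y] by blast
    have "sigma_tree ar S (l z)" if "z \<in> vars_trm (trans_trm a y)" for z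
      using leaf(2)[OF l] trans_trm_wf(2)[OF y_X] that by blast
    then show "sigma_tree ar S (rexp_der a c)"
      unfolding der by (rule sigma_tree_trm_to_rexp[OF trans_trm_wf(1)[OF y_X]])
    have "rexp_to_trm state_of (l z) = Var z" if "z \<in> vars_trm (trans_trm a y)" for z
      using leaf(1)[OF l] trans_trm_wf(2)[OF y_X] that unfolds_RMu(2)[OF l] by fastforce
    then have "rexp_to_trm state_of (rexp_der a c) = trans_trm a y"
      unfolding der rexp_to_trm_trm_to_rexp by (rule subst_trm_Var)
    then show "tm a (state_of c) = tclass ar E X (rexp_to_trm state_of (rexp_der a c))"
      using state tclass_rep[OF tm_TSet[OF y_X]] by (simp add: trans_trm_def)
  qed (fact T_algebra automaton)+
  have "c \<in> S" using assms by (auto simp: S_def)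
  show ?thesis
    using rexp_sem_eq_aut_sem[OF leaf(2)[OF assms] unfolds_RMu(1)[OF assms]]
      out_leaf[OF \<open>c \<in> S\<close>] tm_leaf[OF \<open>c \<in> S\<close>]
    unfolding leaf(1)[OF assms] by blast
qed

lemma reactive_unfolds:
  assumes "x \<in> X"
  obtains e where "unfolds x e" and "reactive ar B0 e"
proof
  define e where "e = unfold_state (Suc (card X)) {} x"
  have "unfolds x (subst_rexp_on RVar (enc ` {}) e)"
    unfolding e_def using assms by (intro unfolds.intros) auto
  then show "unfolds x e" by (simp add: subst_rexp_on_fresh)
  moreover have "wf_rexp ar B0 e" unfolding e_def by (rule wf_unfold_state[OF assms])
  ultimately show "reactive ar B0 e" using unfolds_closed by (simp add: reactive_def)
qed

end

lemma reactive_of_automaton: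
  fixes X :: "'x set" and om :: "'x \<Rightarrow> 'b" and tm :: "'a \<Rightarrow> 'x \<Rightarrow> ('f,'x) trm set"
  assumes alg: "is_T_algebra E I" and fg: "fin_generated ar I B0"
    and aut: "is_T_automaton ar E X tm" and x: "x \<in> X"
  shows "\<exists>e :: ('f,'a,'b) rexp. reactive ar B0 e \<and> rexp_sem I e = aut_sem ar E I X om tm x"
proof -
  obtain enc :: "'x \<Rightarrow> nat" where "inj_on enc X"
    using aut finite_imp_inj_to_nat_seg unfolding is_T_automaton_def by meson
  moreover have "\<forall>y. \<exists>t. wf_trm ar t \<and> vars_trm t \<subseteq> B0 \<and> eval_trm I id t = om y"
    using fg by (simp add: fin_generated_def)
  then obtain \<beta> where "\<forall>y. wf_trm ar (\<beta> y) \<and> vars_trm (\<beta> y) \<subseteq> B0 \<and> eval_trm I id (\<beta> y) = om y"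
    by metis
  ultimately interpret automaton_unfolding ar E I B0 X om tm enc \<beta>
    using alg aut by unfold_locales blast+
  obtain e :: "('f,'a,'b) rexp" where "unfolds x e" "reactive ar B0 e"
    using reactive_unfolds[OF x] by blast
  then show ?thesis using rexp_sem_unfolds by blast
qed

theorem mainTheorem4:
  fixes ar :: "'f \<Rightarrow> nat" and E :: "('f,nat) trm rel"
    and I :: "'f \<Rightarrow> 'b list \<Rightarrow> 'b" and B0 :: "'b set"
  assumes "eq_theory ar E" and "is_T_algebra E I" and "fin_generated ar I B0"
  shows "(\<forall>e :: ('f,'a::finite,'b) rexp. reactive ar B0 e \<longrightarrow>
            (\<exists>(X :: nat set) om tm x. is_T_automaton ar E X tm \<and> x \<in> X \<and>
               rexp_sem I e = aut_sem ar E I X om tm x))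
       \<and> (\<forall>(X :: 'x set) (om :: 'x \<Rightarrow> 'b) (tm :: 'a \<Rightarrow> 'x \<Rightarrow> ('f,'x) trm set) x.
            is_T_automaton ar E X tm \<and> x \<in> X \<longrightarrow>
            (\<exists>e :: ('f,'a,'b) rexp. reactive ar B0 e \<and> rexp_sem I e = aut_sem ar E I X om tm x))"
  \<comment> \<open>the equations need not be well-formed: soundness of \<open>eqv\<close> holds for any E\<close>
proof (intro conjI allI impI)
  fix e :: "('f,'a,'b) rexp"
  assume "reactive ar B0 e"
  then show "\<exists>(X :: nat set) om tm x. is_T_automaton ar E X tm \<and> x \<in> X \<and>
      rexp_sem I e = aut_sem ar E I X om tm x"
    by (rule automaton_of_reactive[OF assms(2)])
next
  fix X :: "'x set" and om :: "'x \<Rightarrow> 'b" and tm :: "'a \<Rightarrow> 'x \<Rightarrow> ('f,'x) trm set" and x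
  assume "is_T_automaton ar E X tm \<and> x \<in> X"
  then show "\<exists>e :: ('f,'a,'b) rexp. reactive ar B0 e \<and> rexp_sem I e = aut_sem ar E I X om tm x"
    using reactive_of_automaton[OF assms(2,3), of X tm x om] by blast
qed

end
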